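(* For every loop $\bar p$ based at $a\in K$, $\chi_{\bar p}^*\chi_{\bar p}=Q_{\bar p}\otimes I$ on $H_a\otimes l^2(S_a)$ (and zero on the other summands of $\mathcal H$), where $Q_{\bar p}$ is the orthogonal projection of $H_a$ onto the domain $H_{\bar p^{-1}*\bar p}=H_{\bar p}$.
   Context: $K$ is a partially ordered set. Elementary paths on $K$: for $b\le a$ the formal symbol $(b,a)$ and for $b\ge a$ the formal symbol $\overline{(b,a)}$; both have starting point $\partial_1=a$ and ending point $\partial_0=b$; $(a,a)=\overline{(a,a)}=:i_a$ is the trivial path. The reverse of $(b,a)$ is $\overline{(a,b)}$ and the reverse of $\overline{(b,a)}$ is $(a,b)$. $\overline S$ is the set of finite sequences $\bar p=s_n*\cdots*s_1$ of elementary paths with $\partial_0 s_{i-1}=\partial_1 s_i$; $\partial_1\bar p=\partial_1 s_1$, $\partial_0\bar p=\partial_0 s_n$, $\bar p^{-1}=s_1^{-1}*\cdots*s_n^{-1}$, and the concatenation $\bar p*\bar q$ is defined when $\partial_1\bar p=\partial_0\bar q$. The equivalence $\sim$ on $\overline S$ is the smallest equivalence relation compatible with concatenation such that for all $a\le b\le c$: $(a,b)*(b,c)\sim(a,c)$, $\overline{(c,b)}*\overline{(b,a)}\sim\overline{(c,a)}$, $(a,b)*\overline{(b,a)}\sim i_a$, $\overline{(b,a)}*(a,b)\sim i_b$. Equivalence classes $p=[\bar p]$ are called paths. $S_a$ denotes the set of paths $p$ with $\partial_0p=a$. A loop based at $a$ is $\bar p\in\overline S$ with $\partial_0\bar p=\partial_1\bar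 p=a$. For each $a\in K$, $H_a$ is a Hilbert space with orthonormal basis $\{e^a_n\}_{n\ge1}$; for $a\le b$, $\gamma_{ba}:H_a\to H_b$ is an isometry mapping each basis vector $e^a_n$ to a basis vector of $\{e^b_m\}$, with $\gamma_{aa}=\mathrm{id}$ and $\gamma_{ca}=\gamma_{cb}\gamma_{ba}$ for $a\le b\le c$. $l^2(S_a)$ is the Hilbert space with orthonormal basis $\{e_p\}_{p\in S_a}$, and $\mathcal H=\bigoplus_{a\in K}H_a\otimes l^2(S_a)$. For $a\le b$, $\chi_a^b\in B(\mathcal H)$ vanishes on all summands other than $H_a\otimes l^2(S_a)$ and satisfies $\chi_a^b(h\otimes e_p)=\gamma_{ba}(h)\otimes e_{[\overline{(b,a)}*\bar p]}$ for $h\in H_a$, $p\in S_a$, $\bar p\in p$; $\chi_a^{b*}$ is its adjoint. For an elementary path put $\chi_{\overline{(b,a)}}=\chi_a^b$ ($a\le b$) and $\chi_{(b,a)}=\chi_b^{a*}$ ($b\le a$), and for $\bar p=s_n*\cdots*s_1\in\overline S$ put $\chi_{\bar p}=\chi_{s_n}\cdots\chi_{s_1}$. The domain $H_{\bar p}$ of $\bar p$ is the closed subspace of $H_{\partial_1\bar p}$ consisting of the vectors $h$ with $\|\chi_{\bar p}(h\otimes e_s)\|=\|h\|$ for all $s\in S_{\partial_1\bar p}$. *)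

theory Defs
  imports "HOL-Analysis.Analysis"
begin

text \<open>Up b a is the elementary path (b,a) (requires b \<le> a);
  Dn b a is the elementary path overline (b,a) (requires b \<ge> a).
  Both start at a (partial_1) and end at b (partial_0).\<close>

datatype 'k elem = Up 'k 'k | Dn 'k 'k

fun estart :: "'k elem \<Rightarrow> 'k" where
  "estart (Up b a) = a" | "estart (Dn b a) = a"

fun eend :: "'k elem \<Rightarrow> 'k" where
  "eend (Up b a) = b" | "eend (Dn b a) = b"

fun evalid :: "'k::order elem \<Rightarrow> bool" where
  "evalid (Up b a) = (b \<le> a)" | "evalid (Dn b a) = (a \<le> b)"

fun einv :: "'k elem \<Rightarrow> 'k elem" where
  "einv (Up b a) = Dn a b" | "einv (Dn b a) = Up a b"

text \<open>A sequence s_n * ... * s_1 is represented by the list [s_n, ..., s_1];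
  concatenation p * q is list append p @ q.\<close>

definition pwf :: "'k::order elem list \<Rightarrow> bool" where
  "pwf xs \<longleftrightarrow> xs \<noteq> [] \<and> (\<forall>e\<in>set xs. evalid e) \<and>
     (\<forall>i. Suc i < length xs \<longrightarrow> estart (xs ! i) = eend (xs ! Suc i))"

definition pstart :: "'k elem list \<Rightarrow> 'k" where
  "pstart xs = estart (last xs)"

definition pend :: "'k elem list \<Rightarrow> 'k" where
  "pend xs = eend (hd xs)"

definition pinv :: "'k elem list \<Rightarrow> 'k elem list" where
  "pinv xs = map einv (rev xs)"

inductive peq :: "'k::order elem list \<Rightarrow> 'k elem list \<Rightarrow> bool" where
  peq_refl: "pwf p \<Longrightarrow> peq p p"
| peq_sym: "peq p q \<Longrightarrow> peq q p"
| peq_trans: "peq p q \<Longrightarrow> peq q r \<Longrightarrow> peq p r"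
| peq_cat: "peq p p' \<Longrightarrow> peq q q' \<Longrightarrow> pstart p = pend q \<Longrightarrow> peq (p @ q) (p' @ q')"
| peq_triv: "peq [Up a a] [Dn a a]"
| peq_up: "a \<le> b \<Longrightarrow> b \<le> c \<Longrightarrow> peq [Up a b, Up b c] [Up a c]"
| peq_dn: "a \<le> b \<Longrightarrow> b \<le> c \<Longrightarrow> peq [Dn c b, Dn b a] [Dn c a]"
| peq_updn: "a \<le> b \<Longrightarrow> peq [Up a b, Dn b a] [Up a a]"
| peq_dnup: "a \<le> b \<Longrightarrow> peq [Dn b a, Up a b] [Up b b]"

definition pclass :: "'k::order elem list \<Rightarrow> 'k elem list set" where
  "pclass xs = {ys. peq xs ys}"

definition Spaths :: "'k::order \<Rightarrow> 'k elem list set set" where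
  "Spaths a = {pclass xs | xs. pwf xs \<and> pend xs = a}"

definition pre :: "'k::order elem \<Rightarrow> 'k elem list set \<Rightarrow> 'k elem list set" where
  "pre e P = {ys. \<exists>xs\<in>P. peq (e # xs) ys}"

definition l2 :: "'i set \<Rightarrow> ('i \<Rightarrow> complex) set" where
  "l2 A = {f. (\<forall>i. i \<notin> A \<longrightarrow> f i = 0) \<and> (\<lambda>i. (cmod (f i))\<^sup>2) summable_on UNIV}"

definition l2norm :: "('i \<Rightarrow> complex) \<Rightarrow> real" where
  "l2norm f = sqrt (infsum (\<lambda>i. (cmod (f i))\<^sup>2) UNIV)"

definition l2inner :: "('i \<Rightarrow> complex) \<Rightarrow> ('i \<Rightarrow> complex) \<Rightarrow> complex" where
  "l2inner f g = infsum (\<lambda>i. cnj (f i) * g i) UNIV"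

text \<open>Basis vector e_n of H_a = l2(nat).\<close>
definition ebasis :: "nat \<Rightarrow> nat \<Rightarrow> complex" where
  "ebasis n = (\<lambda>m. if m = n then 1 else 0)"

text \<open>Index set of the orthonormal basis of the big space
  H = direct sum over a of H_a \<otimes> l2(S_a): triples (a, n, p) with p \<in> S_a.\<close>
definition Bidx :: "('k::order \<times> nat \<times> 'k elem list set) set" where
  "Bidx = {(a, n, p). p \<in> Spaths a}"

abbreviation l2H :: "('k::order \<times> nat \<times> 'k elem list set \<Rightarrow> complex) set" where
  "l2H \<equiv> l2 Bidx"

text \<open>Elementary tensor h \<otimes> e_p in the summand H_a \<otimes> l2(S_a).\<close>
definition tens :: "'k \<Rightarrow> (nat \<Rightarrow> complex) \<Rightarrow> 'k elem list set
    \<Rightarrow> ('k \<times> nat \<times> 'k elem list set \<Rightarrow> complex)" where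
  "tens a h p = (\<lambda>(b, n, q). if b = a \<and> q = p then h n else 0)"

definition gamma_system :: "('k::order \<Rightarrow> 'k \<Rightarrow> (nat \<Rightarrow> complex) \<Rightarrow> (nat \<Rightarrow> complex)) \<Rightarrow> bool" where
  "gamma_system gam \<longleftrightarrow>
    (\<forall>a b. a \<le> b \<longrightarrow>
       (\<forall>h\<in>l2 UNIV. gam b a h \<in> l2 UNIV \<and> l2norm (gam b a h) = l2norm h) \<and>
       (\<forall>h\<in>l2 UNIV. \<forall>k\<in>l2 UNIV. gam b a (\<lambda>n. h n + k n) = (\<lambda>n. gam b a h n + gam b a k n)) \<and>
       (\<forall>h\<in>l2 UNIV. \<forall>c. gam b a (\<lambda>n. c * h n) = (\<lambda>n. c * gam b a h n)) \<and>
       (\<forall>n. \<exists>m. gam b a (ebasis n) = ebasis m)) \<and>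
    (\<forall>a. \<forall>h\<in>l2 UNIV. gam a a h = h) \<and>
    (\<forall>a b c. a \<le> b \<longrightarrow> b \<le> c \<longrightarrow> (\<forall>h\<in>l2 UNIV. gam c a h = gam c b (gam b a h)))"

definition bounded_op :: "(('i \<Rightarrow> complex) \<Rightarrow> ('i \<Rightarrow> complex)) \<Rightarrow> 'i set \<Rightarrow> bool" where
  "bounded_op T A \<longleftrightarrow>
     (\<forall>f\<in>l2 A. T f \<in> l2 A) \<and>
     (\<forall>f\<in>l2 A. \<forall>g\<in>l2 A. T (\<lambda>i. f i + g i) = (\<lambda>i. T f i + T g i)) \<and>
     (\<forall>f\<in>l2 A. \<forall>c. T (\<lambda>i. c * f i) = (\<lambda>i. c * T f i)) \<and>
     (\<exists>C. \<forall>f\<in>l2 A. l2norm (T f) \<le> C * l2norm f)"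

definition adj :: "'i set \<Rightarrow> (('i \<Rightarrow> complex) \<Rightarrow> ('i \<Rightarrow> complex)) \<Rightarrow> (('i \<Rightarrow> complex) \<Rightarrow> ('i \<Rightarrow> complex))" where
  "adj A T = (SOME T'. (\<forall>g\<in>l2 A. T' g \<in> l2 A) \<and>
       (\<forall>f\<in>l2 A. \<forall>g\<in>l2 A. l2inner (T f) g = l2inner f (T' g)))"

definition is_chi :: "('k::order \<Rightarrow> 'k \<Rightarrow> (nat \<Rightarrow> complex) \<Rightarrow> (nat \<Rightarrow> complex)) \<Rightarrow> 'k \<Rightarrow> 'k
     \<Rightarrow> (('k \<times> nat \<times> 'k elem list set \<Rightarrow> complex) \<Rightarrow> ('k \<times> nat \<times> 'k elem list set \<Rightarrow> complex)) \<Rightarrow> bool" where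
  "is_chi gam a b T \<longleftrightarrow>
     bounded_op T Bidx \<and>
     (\<forall>f\<in>l2H. (\<forall>n q. f (a, n, q) = 0) \<longrightarrow> T f = (\<lambda>_. 0)) \<and>
     (\<forall>h\<in>l2 UNIV. \<forall>p\<in>Spaths a. T (tens a h p) = tens b (gam b a h) (pre (Dn b a) p))"

definition chi :: "('k::order \<Rightarrow> 'k \<Rightarrow> (nat \<Rightarrow> complex) \<Rightarrow> (nat \<Rightarrow> complex)) \<Rightarrow> 'k \<Rightarrow> 'k
     \<Rightarrow> (('k \<times> nat \<times> 'k elem list set \<Rightarrow> complex) \<Rightarrow> ('k \<times> nat \<times> 'k elem list set \<Rightarrow> complex))" where
  "chi gam a b = (SOME T. is_chi gam a b T)"

fun chi_elem :: "('k::order \<Rightarrow> 'k \<Rightarrow> (nat \<Rightarrow> complex) \<Rightarrow> (nat \<Rightarrow> complex)) \<Rightarrow> 'k elem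
     \<Rightarrow> (('k \<times> nat \<times> 'k elem list set \<Rightarrow> complex) \<Rightarrow> ('k \<times> nat \<times> 'k elem list set \<Rightarrow> complex))" where
  "chi_elem gam (Dn b a) = chi gam a b"
| "chi_elem gam (Up b a) = adj Bidx (chi gam b a)"

definition chi_seq :: "('k::order \<Rightarrow> 'k \<Rightarrow> (nat \<Rightarrow> complex) \<Rightarrow> (nat \<Rightarrow> complex)) \<Rightarrow> 'k elem list
     \<Rightarrow> (('k \<times> nat \<times> 'k elem list set \<Rightarrow> complex) \<Rightarrow> ('k \<times> nat \<times> 'k elem list set \<Rightarrow> complex))" where
  "chi_seq gam xs = foldr (\<circ>) (map (chi_elem gam) xs) id"

definition Hdom :: "('k::order \<Rightarrow> 'k \<Rightarrow> (nat \<Rightarrow> complex) \<Rightarrow> (nat \<Rightarrow> complex)) \<Rightarrow> 'k elem list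
     \<Rightarrow> (nat \<Rightarrow> complex) set" where
  "Hdom gam xs = {h \<in> l2 UNIV. \<forall>s\<in>Spaths (pstart xs).
      l2norm (chi_seq gam xs (tens (pstart xs) h s)) = l2norm h}"

definition orth_proj :: "(nat \<Rightarrow> complex) set \<Rightarrow> (nat \<Rightarrow> complex) \<Rightarrow> (nat \<Rightarrow> complex)" where
  "orth_proj M h = (THE m. m \<in> M \<and> (\<forall>x\<in>M. l2inner (\<lambda>n. h n - m n) x = 0))"

text \<open>Q \<otimes> I on the summand H_a \<otimes> l2(S_a), zero on all other summands.\<close>
definition tensor_id :: "'k \<Rightarrow> ((nat \<Rightarrow> complex) \<Rightarrow> (nat \<Rightarrow> complex))
     \<Rightarrow> ('k \<times> nat \<times> 'k elem list set \<Rightarrow> complex) \<Rightarrow> ('k \<times> nat \<times> 'k elem list set \<Rightarrow> complex)" where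
  "tensor_id a Q f = (\<lambda>(b, n, q). if b = a then Q (\<lambda>m. f (a, m, q)) n else 0)"

end

(*
  Each elementary operator permutes basis vectors partially: the basis index (a, n, p) with
  p \<in> S_a is sent to (b, \<sigma> n, [s * p]), where \<sigma> is the injection of basis indices induced
  by \<gamma> and prefixing by s is a bijection S_a \<rightarrow> S_b of path classes. Such an operator is the
  pullback T f = f \<circ> \<psi> along a partial injection \<psi> of basis indices, its adjoint is the
  pullback along \<psi>\<inverse>, and so T\<^sup>* T multiplies by the indicator of ran \<psi>. The operator
  \<chi>_p of a sequence p is again such a pullback, and ran \<psi> = ran \<tau>_p \<times> S_a inside the summand
  at a = \<partial>\<^sub>1 p, where \<tau>_p is the composite of the basis index maps along p. Hence
  \<chi>_p\<^sup>* \<chi>_p = Q \<otimes> I with Q the projection onto the vectors supported in ran \<tau>_p; these are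
  exactly the h for which \<chi>_p preserves the norm of h \<otimes> e_s, i.e. the domain H_p. Finally
  \<tau>_{p\<inverse> * p} = \<tau>_p \<circ> \<tau>_p\<inverse> has the same range as \<tau>_p.
*)

theory Submission
  imports Defs
begin

abbreviation sq_cmod :: "('i \<Rightarrow> complex) \<Rightarrow> 'i \<Rightarrow> real" where
  "sq_cmod f \<equiv> (\<lambda>i. (cmod (f i))\<^sup>2)"

lemma l2_summable: "f \<in> l2 A \<Longrightarrow> sq_cmod f summable_on UNIV"
  by (simp add: l2_def)

lemma l2_vanishes_outside: "f \<in> l2 A \<Longrightarrow> i \<notin> A \<Longrightarrow> f i = 0"
  by (simp add: l2_def)

lemma l2_eqI:
  assumes "f \<in> l2 A" "g \<in> l2 A" "\<And>j. j \<in> A \<Longrightarrow> f j = g j"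
  shows "f = g"
  using assms unfolding l2_def by fastforce

lemma l2_zero: "(\<lambda>_. 0) \<in> l2 A"
  unfolding l2_def by auto

lemma cmod_add_sq_le: "(cmod (x + y))\<^sup>2 \<le> 2 * (cmod x)\<^sup>2 + 2 * (cmod y)\<^sup>2"
proof -
  have "(cmod (x + y))\<^sup>2 \<le> (cmod x + cmod y)\<^sup>2"
    by (simp add: power_mono norm_triangle_ineq)
  also have "\<dots> \<le> 2 * (cmod x)\<^sup>2 + 2 * (cmod y)\<^sup>2"
    by (smt (verit) sum_squares_bound power2_sum)
  finally show ?thesis .
qed

lemma l2_add: "f \<in> l2 A \<Longrightarrow> g \<in> l2 A \<Longrightarrow> (\<lambda>i. f i + g i) \<in> l2 A"
  unfolding l2_def
  by (auto intro!: summable_on_comparison_test[of "\<lambda>i. 2 * sq_cmod f i + 2 * sq_cmod g i"]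
      summable_on_add summable_on_cmult_right simp: cmod_add_sq_le)

lemma l2_scale: "f \<in> l2 A \<Longrightarrow> (\<lambda>i. c * f i) \<in> l2 A"
  unfolding l2_def
  by (auto simp: norm_mult power_mult_distrib intro!: summable_on_cmult_right)

lemma l2_restrict: "f \<in> l2 A \<Longrightarrow> (\<lambda>i. if P i then f i else 0) \<in> l2 A"
  unfolding l2_def by (auto intro: summable_on_comparison_test)

lemma cmod_le_l2norm:
  assumes "sq_cmod f summable_on UNIV"
  shows "cmod (f j) \<le> l2norm f"
proof -
  have "sum (sq_cmod f) {j} \<le> infsum (sq_cmod f) UNIV"
    by (rule finite_sum_le_infsum[OF assms]) auto
  then have "sqrt ((cmod (f j))\<^sup>2) \<le> l2norm f"
    unfolding l2norm_def using real_sqrt_le_mono by fastforce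
  then show ?thesis by simp
qed

lemma l2norm_nonneg: "l2norm f \<ge> 0"
  unfolding l2norm_def by (simp add: infsum_nonneg)

lemma l2norm_eq_0_imp_zero:
  assumes "sq_cmod f summable_on UNIV" "l2norm f = 0"
  shows "f = (\<lambda>_. 0)"
  using cmod_le_l2norm[OF assms(1)] assms(2) by fastforce

lemma infsum_sq_cmod_eq_total_iff:
  assumes h: "sq_cmod h summable_on UNIV"
  shows "infsum (sq_cmod h) R = infsum (sq_cmod h) UNIV \<longleftrightarrow> (\<forall>k. k \<notin> R \<longrightarrow> h k = 0)"
proof -
  have s: "sq_cmod h summable_on R" "sq_cmod h summable_on (-R)"
    using summable_on_subset_banach[OF h] by blast+
  have "infsum (sq_cmod h) UNIV = infsum (sq_cmod h) (R \<union> -R)" by simp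
  also have "\<dots> = infsum (sq_cmod h) R + infsum (sq_cmod h) (-R)"
    by (rule infsum_Un_disjoint[OF s]) auto
  finally have split: "infsum (sq_cmod h) UNIV = infsum (sq_cmod h) R + infsum (sq_cmod h) (-R)" .
  have "infsum (sq_cmod h) (-R) = 0 \<longleftrightarrow> (\<forall>k. k \<notin> R \<longrightarrow> h k = 0)"
  proof
    assume "infsum (sq_cmod h) (-R) = 0"
    then show "\<forall>k. k \<notin> R \<longrightarrow> h k = 0"
      using nonneg_infsum_le_0D[OF _ s(2)] by fastforce
  qed (auto intro: infsum_0)
  then show ?thesis using split by auto
qed

definition unit_vec :: "'i \<Rightarrow> 'i \<Rightarrow> complex" where
  "unit_vec j = (\<lambda>i. if i = j then 1 else 0)"

lemma unit_vec_l2: "j \<in> A \<Longrightarrow> unit_vec j \<in> l2 A"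
proof -
  assume j: "j \<in> A"
  have "sq_cmod (unit_vec j) summable_on UNIV \<longleftrightarrow> sq_cmod (unit_vec j) summable_on {j}"
    by (rule summable_on_cong_neutral) (auto simp: unit_vec_def)
  then show ?thesis using j unfolding l2_def by (auto simp: unit_vec_def)
qed

lemma l2inner_unit_vec_left: "l2inner (unit_vec j) g = g j"
proof -
  have "l2inner (unit_vec j) g = infsum (\<lambda>i. cnj (unit_vec j i) * g i) {j}"
    unfolding l2inner_def by (rule infsum_cong_neutral) (auto simp: unit_vec_def)
  then show ?thesis by (simp add: unit_vec_def)
qed

lemma l2inner_unit_vec_right: "l2inner f (unit_vec j) = cnj (f j)"
proof -
  have "l2inner f (unit_vec j) = infsum (\<lambda>i. cnj (f i) * unit_vec j i) {j}"
    unfolding l2inner_def by (rule infsum_cong_neutral) (auto simp: unit_vec_def)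
  then show ?thesis by (simp add: unit_vec_def)
qed

definition l2_supported :: "nat set \<Rightarrow> (nat \<Rightarrow> complex) set" where
  "l2_supported R = {h \<in> l2 UNIV. \<forall>k. k \<notin> R \<longrightarrow> h k = 0}"

lemma orth_proj_l2_supported:
  assumes h: "h \<in> l2 UNIV"
  shows "orth_proj (l2_supported R) h = (\<lambda>k. if k \<in> R then h k else 0)"
  unfolding orth_proj_def
proof (rule the_equality)
  let ?c = "\<lambda>k. if k \<in> R then h k else 0"
  show "?c \<in> l2_supported R \<and> (\<forall>x\<in>l2_supported R. l2inner (\<lambda>n. h n - ?c n) x = 0)"
    using l2_restrict[OF h] unfolding l2inner_def l2_supported_def by (auto intro!: infsum_0)
  fix m assume m: "m \<in> l2_supported R \<and> (\<forall>x\<in>l2_supported R. l2inner (\<lambda>n. h n - m n) x = 0)"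
  show "m = ?c"
  proof
    fix k
    show "m k = ?c k"
    proof (cases "k \<in> R")
      case True
      then have "unit_vec k \<in> l2_supported R"
        using unit_vec_l2[of k UNIV] by (auto simp: l2_supported_def unit_vec_def)
      then have "l2inner (\<lambda>n. h n - m n) (unit_vec k) = 0"
        using m by blast
      then have "cnj (h k - m k) = 0"
        by (simp add: l2inner_unit_vec_right)
      then show ?thesis using True by simp
    qed (use m in \<open>auto simp: l2_supported_def\<close>)
  qed
qed

section \<open>Operators determined by their restrictions to blocks\<close>

definition block_restr :: "('i \<Rightarrow> 'b) \<Rightarrow> 'b set \<Rightarrow> ('i \<Rightarrow> complex) \<Rightarrow> 'i \<Rightarrow> complex" where
  "block_restr P Q f = (\<lambda>i. if P i \<in> Q then f i else 0)"

lemma l2_block_restr: "f \<in> l2 A \<Longrightarrow> block_restr P Q f \<in> l2 A"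
  unfolding block_restr_def by (rule l2_restrict)

lemma block_restr_insert:
  "q \<notin> Q \<Longrightarrow> block_restr P (insert q Q) f = (\<lambda>i. block_restr P {q} f i + block_restr P Q f i)"
  unfolding block_restr_def by auto

lemma block_restr_split: "f = (\<lambda>i. block_restr P (-Q) f i + block_restr P Q f i)"
  unfolding block_restr_def by auto

lemma block_tail_small:
  assumes sf: "sq_cmod f summable_on UNIV" and e: "e > 0"
  shows "\<exists>Q. finite Q \<and> l2norm (block_restr P (- Q) f) < e"
proof -
  obtain F where F: "finite F" "dist (sum (sq_cmod f) F) (infsum (sq_cmod f) UNIV) \<le> e\<^sup>2 / 2"
    using infsum_finite_approximation[OF sf, of "e\<^sup>2 / 2"] e by auto
  have sF: "sq_cmod f summable_on F" "sq_cmod f summable_on (-F)"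
    using F(1) summable_on_subset_banach[OF sf] by auto
  have "infsum (sq_cmod f) UNIV = infsum (sq_cmod f) (F \<union> -F)" by simp
  also have "\<dots> = sum (sq_cmod f) F + infsum (sq_cmod f) (-F)"
    using infsum_Un_disjoint[OF sF] F(1) by simp
  finally have tail: "infsum (sq_cmod f) (-F) \<le> e\<^sup>2 / 2"
    using F(2) by (simp add: dist_real_def)
  define Q where "Q = P ` F"
  define g where "g = block_restr P (-Q) f"
  have sg: "sq_cmod g summable_on UNIV"
    using l2_summable[OF l2_block_restr, of f UNIV] sf by (simp add: l2_def g_def)
  have "infsum (sq_cmod g) UNIV = infsum (sq_cmod g) (-F)"
    by (rule infsum_cong_neutral) (auto simp: block_restr_def Q_def g_def)
  also have "\<dots> \<le> infsum (sq_cmod f) (-F)"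
    by (rule infsum_mono[OF summable_on_subset_banach[OF sg] sF(2)])
       (auto simp: block_restr_def g_def)
  finally have "l2norm g \<le> sqrt (e\<^sup>2 / 2)"
    unfolding l2norm_def using tail real_sqrt_le_mono by fastforce
  also have "\<dots> < e"
    using e real_sqrt_less_mono[of "e\<^sup>2 / 2" "e\<^sup>2"] by simp
  finally show ?thesis using F(1) Q_def g_def by blast
qed

text \<open>The finitely many blocks carrying all but \<open>\<epsilon>\<close> of the norm of \<open>f\<close> are handled by
  additivity, the rest by boundedness.\<close>

lemma eq_if_eq_on_blocks:
  fixes T S :: "('i \<Rightarrow> complex) \<Rightarrow> ('j \<Rightarrow> complex)" and P :: "'i \<Rightarrow> 'b"
  assumes addT: "\<forall>f\<in>l2 A. \<forall>g\<in>l2 A. T (\<lambda>i. f i + g i) = (\<lambda>j. T f j + T g j)"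
    and addS: "\<forall>f\<in>l2 A. \<forall>g\<in>l2 A. S (\<lambda>i. f i + g i) = (\<lambda>j. S f j + S g j)"
    and bT: "\<forall>f\<in>l2 A. sq_cmod (T f) summable_on UNIV \<and> l2norm (T f) \<le> C * l2norm f"
    and bS: "\<forall>f\<in>l2 A. sq_cmod (S f) summable_on UNIV \<and> l2norm (S f) \<le> D * l2norm f"
    and blk: "\<forall>f\<in>l2 A. \<forall>q. T (block_restr P {q} f) = S (block_restr P {q} f)"
    and f: "f \<in> l2 A"
  shows "T f = S f"
proof -
  have fin: "T (block_restr P Q f) = S (block_restr P Q f)" if "finite Q" for Q
    using that
  proof (induction Q rule: finite_induct)
    case empty
    have "block_restr P {} f = block_restr P {undefined} (\<lambda>_. 0)" by (simp add: block_restr_def)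
    then show ?case using blk l2_zero by metis
  next
    case (insert q Q)
    have r: "block_restr P {q} f \<in> l2 A" "block_restr P Q f \<in> l2 A"
      using l2_block_restr[OF f] by auto
    show ?case
      using addT addS r blk f insert(3) by (simp add: block_restr_insert[OF insert(2)])
  qed
  show ?thesis
  proof (rule ext, rule ccontr)
    fix j assume ne: "T f j \<noteq> S f j"
    define d where "d = cmod (T f j - S f j)"
    define K where "K = \<bar>C\<bar> + \<bar>D\<bar> + 1"
    have d: "d > 0" and K: "K > 0" using ne by (auto simp: d_def K_def)
    obtain Q where Q: "finite Q" "l2norm (block_restr P (-Q) f) < d / K"
      using block_tail_small[OF l2_summable[OF f], of "d / K" P] d K by auto
    define R where "R = block_restr P (-Q) f"
    have R: "R \<in> l2 A" "block_restr P Q f \<in> l2 A" using l2_block_restr[OF f] R_def by auto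
    have split: "f = (\<lambda>i. R i + block_restr P Q f i)"
      unfolding R_def by (rule block_restr_split)
    have "T f j - S f j = T R j - S R j"
      using addT addS R fin[OF Q(1)] by (subst (1 2) split) simp
    then have "d \<le> cmod (T R j) + cmod (S R j)"
      unfolding d_def by (metis norm_triangle_ineq4)
    also have "\<dots> \<le> C * l2norm R + D * l2norm R"
      using cmod_le_l2norm[of "T R" j] cmod_le_l2norm[of "S R" j] bT bS R by fastforce
    also have "\<dots> \<le> K * l2norm R"
    proof -
      have "C * l2norm R \<le> \<bar>C\<bar> * l2norm R" "D * l2norm R \<le> \<bar>D\<bar> * l2norm R"
        by (simp_all add: mult_right_mono l2norm_nonneg)
      then show ?thesis
        using l2norm_nonneg[of R] unfolding K_def by (simp add: distrib_right)
    qed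
    also have "\<dots> < d"
      using Q(2) K R_def by (simp add: pos_less_divide_eq mult.commute)
    finally show False by simp
  qed
qed

section \<open>Pullbacks along partial injections\<close>

definition pullback :: "('j \<rightharpoonup> 'i) \<Rightarrow> ('i \<Rightarrow> complex) \<Rightarrow> 'j \<Rightarrow> complex" where
  "pullback \<psi> f = (\<lambda>j. case \<psi> j of None \<Rightarrow> 0 | Some i \<Rightarrow> f i)"

definition inverse_maps :: "('j \<rightharpoonup> 'i) \<Rightarrow> ('i \<rightharpoonup> 'j) \<Rightarrow> bool" where
  "inverse_maps \<psi> \<psi>' \<longleftrightarrow> (\<forall>j i. \<psi> j = Some i \<longleftrightarrow> \<psi>' i = Some j)"

definition inv_map :: "('j \<rightharpoonup> 'i) \<Rightarrow> 'i \<rightharpoonup> 'j" where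
  "inv_map \<tau> m = (if \<exists>n. \<tau> n = Some m then Some (THE n. \<tau> n = Some m) else None)"

lemma inj_on_dom_iff:
  "inj_on \<psi> (dom \<psi>) \<longleftrightarrow> (\<forall>j j' i. \<psi> j = Some i \<longrightarrow> \<psi> j' = Some i \<longrightarrow> j = j')"
  unfolding inj_on_def dom_def by auto

lemma inverse_maps_sym: "inverse_maps \<psi> \<psi>' \<Longrightarrow> inverse_maps \<psi>' \<psi>"
  unfolding inverse_maps_def by metis

lemma inverse_maps_inj_on: "inverse_maps \<psi> \<psi>' \<Longrightarrow> inj_on \<psi> (dom \<psi>)"
  unfolding inverse_maps_def inj_on_dom_iff by (metis option.inject)

lemma inverse_maps_dom: "inverse_maps \<psi> \<psi>' \<Longrightarrow> dom \<psi>' = ran \<psi>"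
  unfolding inverse_maps_def dom_def ran_def by auto

lemma inverse_maps_inv_map:
  assumes "inj_on \<tau> (dom \<tau>)"
  shows "inverse_maps \<tau> (inv_map \<tau>)"
proof -
  have "(THE n'. \<tau> n' = Some m) = n" if "\<tau> n = Some m" for n m
    by (rule the_equality) (use assms that in \<open>auto simp: inj_on_dom_iff\<close>)
  then show ?thesis
    unfolding inverse_maps_def inv_map_def by auto
qed

lemma inj_on_dom_map_comp:
  "inj_on \<tau>1 (dom \<tau>1) \<Longrightarrow> inj_on \<tau>2 (dom \<tau>2) \<Longrightarrow> inj_on (\<tau>2 \<circ>\<^sub>m \<tau>1) (dom (\<tau>2 \<circ>\<^sub>m \<tau>1))"
  unfolding inj_on_dom_iff by (auto simp: map_comp_Some_iff)

lemma pullback_pullback: "pullback \<psi>1 (pullback \<psi>2 f) = pullback (\<psi>2 \<circ>\<^sub>m \<psi>1) f"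
  unfolding pullback_def by (auto simp: map_comp_def split: option.splits)

lemma pullback_add: "pullback \<psi> (\<lambda>i. f i + g i) = (\<lambda>j. pullback \<psi> f j + pullback \<psi> g j)"
  unfolding pullback_def by (auto split: option.splits)

lemma pullback_scale: "pullback \<psi> (\<lambda>i. c * f i) = (\<lambda>j. c * pullback \<psi> f j)"
  unfolding pullback_def by (auto split: option.splits)

lemma pullback_inverse_pullback:
  assumes "inverse_maps \<psi> \<psi>'"
  shows "pullback \<psi>' (pullback \<psi> f) = (\<lambda>i. if i \<in> ran \<psi> then f i else 0)"
proof -
  have "\<psi> j = Some i" if "\<psi>' i = Some j" for i j
    using assms that unfolding inverse_maps_def by blast
  then show ?thesis
    unfolding pullback_def inverse_maps_dom[OF assms, symmetric]
    by (intro ext) (auto simp: dom_def split: option.splits)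
qed

lemma inj_on_the_dom: "inj_on \<psi> (dom \<psi>) \<Longrightarrow> inj_on (\<lambda>j. the (\<psi> j)) (dom \<psi>)"
  unfolding inj_on_dom_iff inj_on_def dom_def by force

lemma the_image_dom: "(\<lambda>j. the (\<psi> j)) ` dom \<psi> = ran \<psi>"
  unfolding dom_def ran_def by force

lemma sq_cmod_pullback:
  "sq_cmod (pullback \<psi> f) = (\<lambda>j. case \<psi> j of None \<Rightarrow> 0 | Some i \<Rightarrow> sq_cmod f i)"
  unfolding pullback_def by (auto split: option.splits)

lemma summable_on_sq_cmod_pullback_iff:
  assumes "inj_on \<psi> (dom \<psi>)"
  shows "sq_cmod (pullback \<psi> f) summable_on UNIV \<longleftrightarrow> sq_cmod f summable_on ran \<psi>"
proof -
  have "sq_cmod (pullback \<psi> f) summable_on UNIV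
      \<longleftrightarrow> (sq_cmod f \<circ> (\<lambda>j. the (\<psi> j))) summable_on dom \<psi>"
    unfolding sq_cmod_pullback
    by (rule summable_on_cong_neutral) (auto simp: dom_def split: option.splits)
  also have "\<dots> \<longleftrightarrow> sq_cmod f summable_on ran \<psi>"
    by (simp add: summable_on_reindex[OF inj_on_the_dom[OF assms], symmetric] the_image_dom)
  finally show ?thesis .
qed

lemma infsum_sq_cmod_pullback:
  assumes "inj_on \<psi> (dom \<psi>)"
  shows "infsum (sq_cmod (pullback \<psi> f)) UNIV = infsum (sq_cmod f) (ran \<psi>)"
proof -
  have "infsum (sq_cmod (pullback \<psi> f)) UNIV = infsum (sq_cmod f \<circ> (\<lambda>j. the (\<psi> j))) (dom \<psi>)"
    unfolding sq_cmod_pullback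
    by (rule infsum_cong_neutral) (auto simp: dom_def split: option.splits)
  also have "\<dots> = infsum (sq_cmod f) (ran \<psi>)"
    by (simp add: infsum_reindex[OF inj_on_the_dom[OF assms], symmetric] the_image_dom)
  finally show ?thesis .
qed

lemma summable_sq_cmod_pullback:
  assumes "inj_on \<psi> (dom \<psi>)" "sq_cmod f summable_on UNIV"
  shows "sq_cmod (pullback \<psi> f) summable_on UNIV"
  using summable_on_sq_cmod_pullback_iff[OF assms(1)] summable_on_subset_banach[OF assms(2)]
  by blast

lemma l2norm_pullback_le:
  assumes "inj_on \<psi> (dom \<psi>)" "sq_cmod f summable_on UNIV"
  shows "l2norm (pullback \<psi> f) \<le> l2norm f"
proof -
  have "infsum (sq_cmod f) (ran \<psi>) \<le> infsum (sq_cmod f) UNIV"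
    by (rule infsum_mono_neutral[OF summable_on_subset_banach[OF assms(2)] assms(2)]) auto
  then show ?thesis
    unfolding l2norm_def infsum_sq_cmod_pullback[OF assms(1)] by simp
qed

lemma pullback_l2:
  assumes "inj_on \<psi> (dom \<psi>)" "dom \<psi> \<subseteq> A" "f \<in> l2 B"
  shows "pullback \<psi> f \<in> l2 A"
  using assms summable_sq_cmod_pullback[OF assms(1) l2_summable[OF assms(3)]]
  unfolding l2_def pullback_def by (auto split: option.splits)

lemma l2inner_pullback:
  assumes ip: "inverse_maps \<psi> \<psi>'"
  shows "l2inner (pullback \<psi> f) g = l2inner f (pullback \<psi>' g)"
proof -
  have inj: "inj_on \<psi> (dom \<psi>)" using inverse_maps_inj_on[OF ip] .
  have inverse: "\<psi>' (the (\<psi> j)) = Some j" if "j \<in> dom \<psi>" for j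
    using ip that unfolding inverse_maps_def by (metis domD option.sel)
  have "l2inner (pullback \<psi> f) g = infsum (\<lambda>j. cnj (f (the (\<psi> j))) * g j) (dom \<psi>)"
    unfolding l2inner_def pullback_def
    by (rule infsum_cong_neutral) (auto simp: dom_def split: option.splits)
  also have "\<dots> = infsum ((\<lambda>i. cnj (f i) * g (the (\<psi>' i))) \<circ> (\<lambda>j. the (\<psi> j))) (dom \<psi>)"
    by (rule infsum_cong) (simp add: inverse)
  also have "\<dots> = infsum (\<lambda>i. cnj (f i) * g (the (\<psi>' i))) (ran \<psi>)"
    by (simp add: infsum_reindex[OF inj_on_the_dom[OF inj], symmetric] the_image_dom)
  also have "\<dots> = l2inner f (pullback \<psi>' g)"
    unfolding l2inner_def pullback_def
    by (rule infsum_cong_neutral)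
       (use inverse_maps_dom[OF ip] in \<open>auto simp flip: domIff split: option.splits\<close>)
  finally show ?thesis .
qed

lemma adj_pullback:
  assumes ip: "inverse_maps \<psi> \<psi>'" and dom: "dom \<psi> \<subseteq> A" "dom \<psi>' \<subseteq> A"
    and T: "\<forall>f\<in>l2 A. T f = pullback \<psi> f" and g: "g \<in> l2 A"
  shows "adj A T g = pullback \<psi>' g"
proof -
  let ?adjoint = "\<lambda>T'. (\<forall>g\<in>l2 A. T' g \<in> l2 A) \<and>
       (\<forall>f\<in>l2 A. \<forall>g\<in>l2 A. l2inner (T f) g = l2inner f (T' g))"
  have inj': "inj_on \<psi>' (dom \<psi>')" using inverse_maps_inj_on[OF inverse_maps_sym[OF ip]] .
  have "?adjoint (pullback \<psi>')"
    using pullback_l2[OF inj' dom(2)] T l2inner_pullback[OF ip] by auto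
  then have adjoint: "?adjoint (adj A T)"
    unfolding adj_def by (rule someI[where P = ?adjoint])
  show ?thesis
  proof (rule l2_eqI)
    show "adj A T g \<in> l2 A" using adjoint g by blast
    show "pullback \<psi>' g \<in> l2 A" using pullback_l2[OF inj' dom(2) g] .
    fix j assume j: "j \<in> A"
    have "adj A T g j = l2inner (unit_vec j) (adj A T g)"
      by (simp add: l2inner_unit_vec_left)
    also have "\<dots> = l2inner (T (unit_vec j)) g"
      using adjoint g unit_vec_l2[OF j] by auto
    also have "\<dots> = l2inner (unit_vec j) (pullback \<psi>' g)"
      using T unit_vec_l2[OF j] l2inner_pullback[OF ip] by auto
    also have "\<dots> = pullback \<psi>' g j"
      by (simp add: l2inner_unit_vec_left)
    finally show "adj A T g j = pullback \<psi>' g j" .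
  qed
qed

lemma adj_comp_pullback:
  assumes ip: "inverse_maps \<psi> \<psi>'" and dom: "dom \<psi> \<subseteq> A" "dom \<psi>' \<subseteq> A"
    and T: "\<forall>f\<in>l2 A. T f = pullback \<psi> f" and f: "f \<in> l2 A"
  shows "adj A T (T f) = (\<lambda>i. if i \<in> ran \<psi> then f i else 0)"
proof -
  have "T f \<in> l2 A"
    using T f pullback_l2[OF inverse_maps_inj_on[OF ip] dom(1) f] by simp
  then have "adj A T (T f) = pullback \<psi>' (pullback \<psi> f)"
    using adj_pullback[OF ip dom T] T f by simp
  then show ?thesis by (simp add: pullback_inverse_pullback[OF ip])
qed

lemma ebasis_eq_unit_vec: "ebasis n = unit_vec n"
  unfolding ebasis_def unit_vec_def by auto

lemma ebasis_l2: "ebasis n \<in> l2 UNIV"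
  by (simp add: ebasis_eq_unit_vec unit_vec_l2)

definition gamma_index :: "('k \<Rightarrow> 'k \<Rightarrow> (nat \<Rightarrow> complex) \<Rightarrow> (nat \<Rightarrow> complex)) \<Rightarrow> 'k \<Rightarrow> 'k \<Rightarrow> nat \<Rightarrow> nat"
  where "gamma_index gam b a n = (SOME m. gam b a (ebasis n) = ebasis m)"

definition gamma_index_inv :: "('k \<Rightarrow> 'k \<Rightarrow> (nat \<Rightarrow> complex) \<Rightarrow> (nat \<Rightarrow> complex)) \<Rightarrow> 'k \<Rightarrow> 'k \<Rightarrow> nat \<rightharpoonup> nat"
  where "gamma_index_inv gam b a = inv_map (\<lambda>n. Some (gamma_index gam b a n))"

context
  fixes gam :: "'k::order \<Rightarrow> 'k \<Rightarrow> (nat \<Rightarrow> complex) \<Rightarrow> (nat \<Rightarrow> complex)" and a b :: 'k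
  assumes gam: "gamma_system gam" and ab: "a \<le> b"
begin

lemma gamma_isometry: "h \<in> l2 UNIV \<Longrightarrow> gam b a h \<in> l2 UNIV \<and> l2norm (gam b a h) = l2norm h"
  using gam ab unfolding gamma_system_def by blast

lemma gamma_add:
  "h \<in> l2 UNIV \<Longrightarrow> k \<in> l2 UNIV \<Longrightarrow> gam b a (\<lambda>n. h n + k n) = (\<lambda>n. gam b a h n + gam b a k n)"
  using gam ab unfolding gamma_system_def by blast

lemma gamma_scale: "h \<in> l2 UNIV \<Longrightarrow> gam b a (\<lambda>n. c * h n) = (\<lambda>n. c * gam b a h n)"
  using gam ab unfolding gamma_system_def by blast

lemma gamma_ebasis: "gam b a (ebasis n) = ebasis (gamma_index gam b a n)"
proof -
  have "\<exists>m. gam b a (ebasis n) = ebasis m" using gam ab unfolding gamma_system_def by blast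
  then show ?thesis unfolding gamma_index_def by (rule someI_ex)
qed

text \<open>\<open>\<gamma>\<close> kills \<open>e\<^sub>n - e\<^sub>n\<^sub>'\<close> when the indices collide, which an isometry cannot do.\<close>

lemma inj_gamma_index: "inj (gamma_index gam b a)"
proof (rule injI, rule ccontr)
  fix n n' assume eq: "gamma_index gam b a n = gamma_index gam b a n'" and ne: "n \<noteq> n'"
  define d where "d = (\<lambda>i. ebasis n i + (-1) * ebasis n' i)"
  have d: "d \<in> l2 UNIV" unfolding d_def by (intro l2_add l2_scale ebasis_l2)
  have "gam b a d = (\<lambda>i. gam b a (ebasis n) i + (-1) * gam b a (ebasis n') i)"
    unfolding d_def by (simp only: gamma_add[OF ebasis_l2 l2_scale[OF ebasis_l2]]
        gamma_scale[OF ebasis_l2])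
  then have "gam b a d = (\<lambda>_. 0)" using eq by (simp add: gamma_ebasis)
  then have "l2norm d = 0" using gamma_isometry[OF d] by (simp add: l2norm_def)
  then have "d n = 0" using l2norm_eq_0_imp_zero[OF l2_summable[OF d]] by simp
  then show False using ne unfolding d_def ebasis_def by simp
qed

lemma inj_on_dom_gamma_index: "inj_on (\<lambda>n. Some (gamma_index gam b a n)) (dom (\<lambda>n. Some (gamma_index gam b a n)))"
  using inj_gamma_index unfolding inj_on_dom_iff by (auto dest: injD)

lemma inverse_maps_gamma_index:
  "inverse_maps (\<lambda>n. Some (gamma_index gam b a n)) (gamma_index_inv gam b a)"
  unfolding gamma_index_inv_def by (rule inverse_maps_inv_map[OF inj_on_dom_gamma_index])

lemma gamma_index_inv_eq_Some_iff:
  "gamma_index_inv gam b a m = Some n \<longleftrightarrow> gamma_index gam b a n = m"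
  using inverse_maps_gamma_index unfolding inverse_maps_def by auto

lemma gamma_index_inv_gamma_index: "gamma_index_inv gam b a (gamma_index gam b a n) = Some n"
  by (simp add: gamma_index_inv_eq_Some_iff)

lemma inj_on_dom_gamma_index_inv: "inj_on (gamma_index_inv gam b a) (dom (gamma_index_inv gam b a))"
  using inverse_maps_inj_on[OF inverse_maps_sym[OF inverse_maps_gamma_index]] .

text \<open>Both sides are bounded and additive and agree on the one-dimensional blocks \<open>\<complex> e\<^sub>n\<close>.\<close>

lemma gamma_eq_pullback:
  assumes "h \<in> l2 UNIV"
  shows "gam b a h = pullback (gamma_index_inv gam b a) h"
proof (rule eq_if_eq_on_blocks[where T = "gam b a" and S = "pullback (gamma_index_inv gam b a)"
      and P = id and C = 1 and D = 1])
  let ?\<tau> = "gamma_index_inv gam b a"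
  show "\<forall>f\<in>l2 UNIV. \<forall>g\<in>l2 UNIV. gam b a (\<lambda>i. f i + g i) = (\<lambda>j. gam b a f j + gam b a g j)"
    using gamma_add by blast
  show "\<forall>f\<in>l2 UNIV. \<forall>g\<in>l2 UNIV. pullback ?\<tau> (\<lambda>i. f i + g i) = (\<lambda>j. pullback ?\<tau> f j + pullback ?\<tau> g j)"
    by (simp add: pullback_add)
  show "\<forall>f\<in>l2 UNIV. sq_cmod (gam b a f) summable_on UNIV \<and> l2norm (gam b a f) \<le> 1 * l2norm f"
    using gamma_isometry l2_summable by fastforce
  show "\<forall>f\<in>l2 UNIV. sq_cmod (pullback ?\<tau> f) summable_on UNIV \<and> l2norm (pullback ?\<tau> f) \<le> 1 * l2norm f"
    using summable_sq_cmod_pullback[OF inj_on_dom_gamma_index_inv]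
      l2norm_pullback_le[OF inj_on_dom_gamma_index_inv] l2_summable by fastforce
  show "\<forall>f\<in>l2 UNIV. \<forall>q. gam b a (block_restr id {q} f) = pullback ?\<tau> (block_restr id {q} f)"
  proof (intro ballI allI)
    fix f :: "nat \<Rightarrow> complex" and q
    have r: "block_restr id {q} f = (\<lambda>m. f q * ebasis q m)"
      unfolding block_restr_def ebasis_def by auto
    have "gam b a (block_restr id {q} f) = (\<lambda>m. f q * ebasis (gamma_index gam b a q) m)"
      unfolding r by (simp add: gamma_scale ebasis_l2 gamma_ebasis)
    also have "\<dots> = pullback ?\<tau> (block_restr id {q} f)"
      unfolding r pullback_def ebasis_def
      by (intro ext) (auto simp: gamma_index_inv_eq_Some_iff gamma_index_inv_gamma_index inj_eq[OF inj_gamma_index] split: option.splits)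
    finally show "gam b a (block_restr id {q} f) = pullback ?\<tau> (block_restr id {q} f)" .
  qed
qed (rule assms)

end

lemma pwf_Cons:
  "pwf (x # xs) \<longleftrightarrow> evalid x \<and> (xs = [] \<or> (pwf xs \<and> estart x = pend xs))"
proof (cases xs)
  case (Cons y ys)
  have all_nat: "(\<forall>i. Q i) \<longleftrightarrow> Q 0 \<and> (\<forall>i. Q (Suc i))" for Q :: "nat \<Rightarrow> bool"
    by (metis not0_implies_Suc)
  have "(\<forall>i. Suc i < length (x # xs) \<longrightarrow> estart ((x # xs) ! i) = eend ((x # xs) ! Suc i))
     \<longleftrightarrow> estart x = eend y \<and> (\<forall>i. Suc i < length xs \<longrightarrow> estart (xs ! i) = eend (xs ! Suc i))"
    unfolding Cons by (subst all_nat) simp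
  then show ?thesis using Cons by (auto simp: pwf_def pend_def)
qed (simp add: pwf_def)

lemma pwf_single[simp]: "pwf [x] \<longleftrightarrow> evalid x"
  by (simp add: pwf_Cons)

lemma pstart_single[simp]: "pstart [x] = estart x"
  by (simp add: pstart_def)

lemma pstart_Cons: "xs \<noteq> [] \<Longrightarrow> pstart (x # xs) = pstart xs"
  by (simp add: pstart_def)

lemma pend_Cons[simp]: "pend (x # xs) = eend x"
  by (simp add: pend_def)

lemma pwf_nonempty: "pwf xs \<Longrightarrow> xs \<noteq> []"
  by (simp add: pwf_def)

lemma pwf_append:
  "pwf p \<Longrightarrow> pwf q \<Longrightarrow> pstart p = pend q \<Longrightarrow>
     pwf (p @ q) \<and> pstart (p @ q) = pstart q \<and> pend (p @ q) = pend p"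
proof (induction p)
  case Nil then show ?case by (simp add: pwf_def)
next
  case (Cons x p)
  show ?case
  proof (cases "p = []")
    case True
    then show ?thesis using Cons.prems pwf_nonempty[of q]
      by (auto simp: pwf_Cons pstart_def)
  next
    case False
    have "pwf p" "estart x = pend p" "evalid x" using Cons.prems(1) False by (auto simp: pwf_Cons)
    moreover have "pstart p = pend q" using Cons.prems(3) False by (simp add: pstart_Cons)
    ultimately have ih: "pwf (p @ q) \<and> pstart (p @ q) = pstart q \<and> pend (p @ q) = pend p"
      using Cons.IH Cons.prems by blast
    then show ?thesis using \<open>estart x = pend p\<close> \<open>evalid x\<close> False pwf_nonempty[of q] Cons.prems(2)
      by (auto simp: pwf_Cons pstart_def)
  qed
qed

lemma pclass_eq: "peq x y \<Longrightarrow> pclass x = pclass y"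
  unfolding pclass_def by (auto intro: peq_trans peq_sym)

lemma pre_pclass:
  assumes "pwf (e # x0)" "x0 \<noteq> []"
  shows "pre e (pclass x0) = pclass (e # x0)"
proof -
  have x0: "pwf x0" "estart e = pend x0" "evalid e" using assms by (auto simp: pwf_Cons)
  have ce: "peq (e # x0) (e # xs)" if "peq x0 xs" for xs
    using peq_cat[OF peq_refl[of "[e]"] that] x0 by simp
  show ?thesis unfolding pre_def pclass_def
  proof safe
    fix ys xs assume "peq x0 xs" "peq (e # xs) ys"
    thus "peq (e # x0) ys" using ce peq_trans by blast
  next
    fix ys assume "peq (e # x0) ys"
    thus "\<exists>xs\<in>{ys. peq x0 ys}. peq (e # xs) ys" using peq_refl[OF x0(1)] by blast
  qed
qed

lemma Spaths_elim:
  assumes "r \<in> Spaths b"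
  obtains r0 where "pwf r0" "pend r0 = b" "r = pclass r0"
  using assms unfolding Spaths_def by blast

lemma Spaths_intro: "pwf r0 \<Longrightarrow> pend r0 = b \<Longrightarrow> pclass r0 \<in> Spaths b"
  unfolding Spaths_def by blast

lemma peq_trivial_Cons:
  assumes "pwf r0" "pend r0 = c"
  shows "peq (Up c c # r0) r0"
proof -
  obtain x r' where r0: "r0 = x # r'" using pwf_nonempty[OF assms(1)] by (cases r0) auto
  have x: "evalid x" "eend x = c" "r' = [] \<or> (pwf r' \<and> estart x = pend r')"
    using assms r0 by (auto simp: pwf_Cons)
  have base: "peq [Up c c, x] [x]"
  proof (cases x)
    case (Up c' d)
    then have "c' = c" "c \<le> d" using x by auto
    then show ?thesis using Up peq_up[of c c d] by simp
  next
    case (Dn c' d)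
    then have cc: "c' = c" "d \<le> c" using x by auto
    have "peq ([Up c c] @ [Dn c d]) ([Dn c c] @ [Dn c d])"
      by (rule peq_cat[OF peq_triv peq_refl]) (use cc in auto)
    moreover have "peq [Dn c c, Dn c d] [Dn c d]" using peq_dn[of d c c] cc by simp
    ultimately show ?thesis using Dn cc by (auto intro: peq_trans)
  qed
  show ?thesis
  proof (cases "r' = []")
    case True then show ?thesis using base r0 by simp
  next
    case False
    then have "pwf r'" "estart x = pend r'" using x by auto
    then have "peq ([Up c c, x] @ r') ([x] @ r')"
      by (intro peq_cat[OF base peq_refl]) (auto simp: pstart_def)
    then show ?thesis using r0 by simp
  qed
qed

definition bij_pair :: "'a set \<Rightarrow> 'b set \<Rightarrow> ('a \<Rightarrow> 'b) \<Rightarrow> ('b \<Rightarrow> 'a) \<Rightarrow> bool" where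
  "bij_pair E S P Q \<longleftrightarrow> (\<forall>r\<in>E. P r \<in> S \<and> Q (P r) = r) \<and> (\<forall>s\<in>S. Q s \<in> E \<and> P (Q s) = s)"

lemma bij_pair_sym: "bij_pair E S P Q \<Longrightarrow> bij_pair S E Q P"
  unfolding bij_pair_def by auto

lemma bij_pair_comp: "bij_pair E M P1 Q1 \<Longrightarrow> bij_pair M S P2 Q2 \<Longrightarrow> bij_pair E S (P2 \<circ> P1) (Q1 \<circ> Q2)"
  unfolding bij_pair_def by auto

lemma pre_pre_cancel:
  assumes cancel: "peq [e, e'] [Up c c]" and w: "pwf [e, e']" and c: "estart e' = c"
    and r: "r \<in> Spaths c"
  shows "pre e' r \<in> Spaths (eend e') \<and> pre e (pre e' r) = r"
proof -
  obtain r0 where r0: "pwf r0" "pend r0 = c" "r = pclass r0" using r by (rule Spaths_elim)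
  have w1: "pwf (e' # r0)" using w r0 c by (simp add: pwf_Cons pwf_nonempty)
  have e1: "pre e' r = pclass (e' # r0)"
    using pre_pclass[OF w1 pwf_nonempty[OF r0(1)]] r0 by simp
  have w2: "pwf (e # e' # r0)" using w w1 by (simp add: pwf_Cons)
  have e2: "pre e (pre e' r) = pclass (e # e' # r0)"
    using pre_pclass[OF w2] e1 by simp
  have "peq ([e, e'] @ r0) ([Up c c] @ r0)"
    by (rule peq_cat[OF cancel peq_refl[OF r0(1)]]) (simp add: pstart_def r0 c)
  then have "peq (e # e' # r0) r0" using peq_trivial_Cons[OF r0(1,2)] peq_trans by auto
  then show ?thesis using e2 e1 r0 pclass_eq Spaths_intro[OF w1] by simp
qed

lemma bij_pair_pre:
  assumes ab: "a \<le> b"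
  shows "bij_pair (Spaths b) (Spaths a) (pre (Up a b)) (pre (Dn b a))"
  unfolding bij_pair_def
  using pre_pre_cancel[OF peq_dnup[OF ab]] pre_pre_cancel[OF peq_updn[OF ab]] ab
  by (simp add: pwf_Cons)

lemma pclass_trivial_in_Spaths: "pclass [Up a a] \<in> Spaths a"
  by (rule Spaths_intro) auto

lemma evalid_einv: "evalid (einv x) = evalid x"
  by (cases x) auto

lemma einv_start_end: "estart (einv x) = eend x" "eend (einv x) = estart x"
  by (cases x, auto)+

lemma pinv_Cons: "pinv (x # xs) = pinv xs @ [einv x]"
  by (simp add: pinv_def)

lemma pinv_wf: "pwf xs \<Longrightarrow> pwf (pinv xs) \<and> pstart (pinv xs) = pend xs \<and> pend (pinv xs) = pstart xs"
proof (induction xs)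
  case Nil then show ?case by (simp add: pwf_def)
next
  case (Cons x xs)
  show ?case
  proof (cases "xs = []")
    case True then show ?thesis using Cons.prems
      by (simp add: pinv_def evalid_einv einv_start_end)
  next
    case False
    then have h: "pwf xs" "estart x = pend xs" "evalid x" using Cons.prems by (auto simp: pwf_Cons)
    then have ih: "pwf (pinv xs)" "pstart (pinv xs) = pend xs" "pend (pinv xs) = pstart xs"
      using Cons.IH by auto
    have w: "pwf [einv x]" by (simp add: evalid_einv h)
    have "pwf (pinv xs @ [einv x]) \<and> pstart (pinv xs @ [einv x]) = pstart [einv x]
          \<and> pend (pinv xs @ [einv x]) = pend (pinv xs)"
      by (rule pwf_append[OF ih(1) w]) (simp add: ih h einv_start_end)
    then show ?thesis using ih False by (simp add: pinv_Cons einv_start_end pstart_Cons)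
  qed
qed

section \<open>The operators \<open>\<chi>\<close> as pullbacks\<close>

type_synonym 'k idx = "'k \<times> nat \<times> 'k elem list set"

lemma slice_l2: "f \<in> l2H \<Longrightarrow> (\<lambda>m. f (a, m, q)) \<in> l2 UNIV"
proof -
  assume f: "f \<in> l2H"
  have inj: "inj_on (\<lambda>m. (a, m, q)) UNIV" by (auto simp: inj_on_def)
  have "sq_cmod f summable_on range (\<lambda>m. (a, m, q))"
    using summable_on_subset_banach[OF l2_summable[OF f]] by blast
  then have "(sq_cmod f \<circ> (\<lambda>m. (a, m, q))) summable_on UNIV"
    using summable_on_reindex[OF inj] by blast
  then show ?thesis unfolding l2_def by (simp add: o_def)
qed

lemma tens_l2:
  assumes h: "h \<in> l2 UNIV" and s: "s \<in> Spaths a"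
  shows "tens a h s \<in> l2H"
proof -
  have inj: "inj_on (\<lambda>m. (a, m, s)) UNIV" by (auto simp: inj_on_def)
  have "sq_cmod (tens a h s) summable_on UNIV
      \<longleftrightarrow> sq_cmod (tens a h s) summable_on range (\<lambda>m. (a, m, s))"
    by (rule summable_on_cong_neutral) (auto simp: tens_def)
  also have "\<dots> \<longleftrightarrow> sq_cmod h summable_on UNIV"
    by (simp add: summable_on_reindex[OF inj] o_def tens_def)
  finally show ?thesis using h s unfolding l2_def Bidx_def by (auto simp: tens_def)
qed

text \<open>The pullback along \<open>block_map s e \<tau> P\<close> sends \<open>e\<^sub>n \<otimes> e\<^sub>q\<close> in the summand at \<open>s\<close> to
  \<open>e\<^sub>m \<otimes> e\<^sub>r\<close> in the summand at \<open>e\<close>, where \<open>\<tau> m = Some n\<close> and \<open>P r = q\<close>, and to \<open>0\<close> if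
  \<open>n \<notin> ran \<tau>\<close>.\<close>

definition block_map :: "'k::order \<Rightarrow> 'k \<Rightarrow> (nat \<rightharpoonup> nat) \<Rightarrow> ('k elem list set \<Rightarrow> 'k elem list set)
    \<Rightarrow> 'k idx \<rightharpoonup> 'k idx" where
  "block_map s e \<tau> P = (\<lambda>(c, m, r).
     if c = e \<and> r \<in> Spaths e then map_option (\<lambda>n. (s, n, P r)) (\<tau> m) else None)"

lemma block_map_eq_Some_iff:
  "block_map s e \<tau> P (c, m, r) = Some (c', n, q) \<longleftrightarrow>
     c = e \<and> r \<in> Spaths e \<and> \<tau> m = Some n \<and> c' = s \<and> q = P r"
  unfolding block_map_def by auto

lemma dom_block_map: "dom (block_map s e \<tau> P) \<subseteq> Bidx"
  unfolding block_map_def Bidx_def by (auto split: if_splits)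

lemma bij_pair_iff: "bij_pair E S P Q \<Longrightarrow> p \<in> S \<Longrightarrow> (r \<in> E \<and> P r = p) \<longleftrightarrow> r = Q p"
  unfolding bij_pair_def by metis

lemma inj_on_dom_block_map:
  assumes "inj_on \<tau> (dom \<tau>)" "bij_pair (Spaths e) S P Q"
  shows "inj_on (block_map s e \<tau> P) (dom (block_map s e \<tau> P))"
  unfolding inj_on_dom_iff
proof (intro allI impI)
  fix j j' i assume h: "block_map s e \<tau> P j = Some i" "block_map s e \<tau> P j' = Some i"
  obtain c m r c' m' r' c1 n q where idx: "j = (c, m, r)" "j' = (c', m', r')" "i = (c1, n, q)"
    by (metis prod_cases3)
  from h have "c = e" "r \<in> Spaths e" "\<tau> m = Some n" "q = P r"
       "c' = e" "r' \<in> Spaths e" "\<tau> m' = Some n" "q = P r'"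
    unfolding idx by (auto simp: block_map_eq_Some_iff)
  moreover from this have "m = m'" using assms(1) unfolding inj_on_dom_iff by blast
  moreover have "r = r'" using assms(2) calculation unfolding bij_pair_def by metis
  ultimately show "j = j'" using idx by simp
qed

lemma inverse_maps_block_map:
  fixes e :: "'k::order"
  assumes "inverse_maps \<tau> \<tau>'" "bij_pair (Spaths e) (Spaths s) P Q"
  shows "inverse_maps (block_map s e \<tau> P) (block_map e s \<tau>' Q)"
  unfolding inverse_maps_def
proof (intro allI)
  fix j i :: "'k idx"
  obtain c m r c1 n q where idx: "j = (c, m, r)" "i = (c1, n, q)" by (metis prod_cases3)
  show "block_map s e \<tau> P j = Some i \<longleftrightarrow> block_map e s \<tau>' Q i = Some j"
    unfolding idx block_map_eq_Some_iff using assms unfolding inverse_maps_def bij_pair_def by metis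
qed

lemma block_map_comp:
  fixes e :: "'k::order"
  assumes "\<forall>r\<in>Spaths e. P1 r \<in> Spaths m"
  shows "block_map s m \<tau>2 P2 \<circ>\<^sub>m block_map m e \<tau>1 P1 = block_map s e (\<tau>2 \<circ>\<^sub>m \<tau>1) (P2 \<circ> P1)"
proof
  fix j :: "'k idx"
  obtain c k r where j: "j = (c, k, r)" by (cases j) auto
  show "(block_map s m \<tau>2 P2 \<circ>\<^sub>m block_map m e \<tau>1 P1) j = block_map s e (\<tau>2 \<circ>\<^sub>m \<tau>1) (P2 \<circ> P1) j"
    unfolding j block_map_def using assms
    by (cases "\<tau>1 k") (auto simp: map_comp_def map_option_case split: option.splits)
qed

lemma ran_block_map:
  assumes "bij_pair (Spaths e) (Spaths s) P Q"
  shows "(s', k, q) \<in> ran (block_map s e \<tau> P) \<longleftrightarrow> s' = s \<and> k \<in> ran \<tau> \<and> q \<in> Spaths s"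
proof
  assume "(s', k, q) \<in> ran (block_map s e \<tau> P)"
  then obtain j where "block_map s e \<tau> P j = Some (s', k, q)" unfolding ran_def by blast
  then obtain c m r where "block_map s e \<tau> P (c, m, r) = Some (s', k, q)" by (cases j) auto
  then show "s' = s \<and> k \<in> ran \<tau> \<and> q \<in> Spaths s"
    using assms unfolding block_map_eq_Some_iff bij_pair_def ran_def by auto
next
  assume h: "s' = s \<and> k \<in> ran \<tau> \<and> q \<in> Spaths s"
  then obtain m where m: "\<tau> m = Some k" unfolding ran_def by blast
  have "block_map s e \<tau> P (e, m, Q q) = Some (s', k, q)"
    unfolding block_map_eq_Some_iff using h m assms unfolding bij_pair_def by auto
  then show "(s', k, q) \<in> ran (block_map s e \<tau> P)" unfolding ran_def by blast
qed

text \<open>An operator satisfying the defining properties of \<open>\<chi>\<^sub>a\<^sup>b\<close> is determined by them: on each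
  block \<open>(c, q)\<close> of indices it either sees an elementary tensor \<open>h \<otimes> e\<^sub>q\<close> or vanishes.\<close>

lemma is_chi_unique:
  assumes T: "is_chi gam a b T" and S: "is_chi gam a b S" and f: "f \<in> l2H"
  shows "T f = S f"
proof -
  have bounded: "\<exists>C. \<forall>f\<in>l2H. sq_cmod (U f) summable_on UNIV \<and> l2norm (U f) \<le> C * l2norm f"
    if "is_chi gam a b U" for U
    using that l2_summable unfolding is_chi_def bounded_op_def by metis
  obtain C D where C: "\<forall>f\<in>l2H. sq_cmod (T f) summable_on UNIV \<and> l2norm (T f) \<le> C * l2norm f"
    and D: "\<forall>f\<in>l2H. sq_cmod (S f) summable_on UNIV \<and> l2norm (S f) \<le> D * l2norm f"
    using bounded[OF T] bounded[OF S] by blast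
  let ?P = "\<lambda>(c :: 'a, m :: nat, q :: 'a elem list set). (c, q)"
  have blocks: "T (block_restr ?P {(c, q)} h) = S (block_restr ?P {(c, q)} h)"
    if h: "h \<in> l2H" for h c q
  proof (cases "c = a \<and> q \<in> Spaths a")
    case True
    then have "block_restr ?P {(c, q)} h = tens a (\<lambda>m. h (a, m, q)) q"
      unfolding block_restr_def tens_def by auto
    then show ?thesis using T S slice_l2[OF h] True unfolding is_chi_def by auto
  next
    case False
    let ?g = "block_restr ?P {(c, q)} h"
    have g: "?g \<in> l2H" by (rule l2_block_restr[OF h])
    moreover have "?g (a, n, q') = 0" for n q'
      using False l2_vanishes_outside[OF g, of "(a, n, q')"]
      unfolding block_restr_def by (auto simp: Bidx_def)
    ultimately show ?thesis using T S unfolding is_chi_def by auto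
  qed
  show ?thesis
  proof (rule eq_if_eq_on_blocks[where T = T and S = S and P = ?P, OF _ _ C D _ f])
    show "\<forall>f\<in>l2H. \<forall>g\<in>l2H. T (\<lambda>i. f i + g i) = (\<lambda>j. T f j + T g j)"
      using T unfolding is_chi_def bounded_op_def by blast
    show "\<forall>f\<in>l2H. \<forall>g\<in>l2H. S (\<lambda>i. f i + g i) = (\<lambda>j. S f j + S g j)"
      using S unfolding is_chi_def bounded_op_def by blast
    show "\<forall>g\<in>l2H. \<forall>cq. T (block_restr ?P {cq} g) = S (block_restr ?P {cq} g)"
      using blocks by auto
  qed
qed

lemma is_chi_pullback:
  assumes gam: "gamma_system gam" and ab: "a \<le> b"
  shows "is_chi gam a b (pullback (block_map a b (gamma_index_inv gam b a) (pre (Up a b))))"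
proof -
  define \<psi> where "\<psi> = block_map a b (gamma_index_inv gam b a) (pre (Up a b))"
  have bp: "bij_pair (Spaths b) (Spaths a) (pre (Up a b)) (pre (Dn b a))"
    by (rule bij_pair_pre[OF ab])
  have inj: "inj_on \<psi> (dom \<psi>)"
    unfolding \<psi>_def by (rule inj_on_dom_block_map[OF inj_on_dom_gamma_index_inv[OF gam ab] bp])
  have vanishes: "pullback \<psi> g = (\<lambda>_. 0)" if "\<forall>n q. g (a, n, q) = 0" for g
    using that unfolding pullback_def \<psi>_def block_map_def
    by (intro ext) (auto split: option.splits prod.splits)
  have tensor: "pullback \<psi> (tens a h p) = tens b (gam b a h) (pre (Dn b a) p)"
    if h: "h \<in> l2 UNIV" and p: "p \<in> Spaths a" for h p
  proof
    fix j :: "'a idx"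
    obtain c m r where j: "j = (c, m, r)" by (cases j) auto
    have "(r \<in> Spaths b \<and> pre (Up a b) r = p) \<longleftrightarrow> r = pre (Dn b a) p"
      by (rule bij_pair_iff[OF bp p])
    then show "pullback \<psi> (tens a h p) j = tens b (gam b a h) (pre (Dn b a) p) j"
      unfolding gamma_eq_pullback[OF gam ab h] j pullback_def \<psi>_def block_map_def tens_def
      by (auto split: option.splits)
  qed
  show ?thesis
    unfolding is_chi_def bounded_op_def \<psi>_def[symmetric]
  proof (intro conjI ballI allI impI)
    show "pullback \<psi> g \<in> l2H" if "g \<in> l2H" for g
      using pullback_l2[OF inj _ that] dom_block_map \<psi>_def by blast
    show "\<exists>C. \<forall>f\<in>l2H. l2norm (pullback \<psi> f) \<le> C * l2norm f"
      using l2norm_pullback_le[OF inj] l2_summable by (intro exI[of _ 1]) auto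
  qed (auto simp: pullback_add pullback_scale vanishes tensor)
qed

lemma chi_eq_pullback:
  assumes gam: "gamma_system gam" and ab: "a \<le> b" and f: "f \<in> l2H"
  shows "chi gam a b f = pullback (block_map a b (gamma_index_inv gam b a) (pre (Up a b))) f"
proof (rule is_chi_unique[OF _ is_chi_pullback[OF gam ab] f])
  show "is_chi gam a b (chi gam a b)"
    unfolding chi_def by (rule someI[where P = "is_chi gam a b", OF is_chi_pullback[OF gam ab]])
qed

lemma adj_chi_eq_pullback:
  assumes gam: "gamma_system gam" and ba: "b \<le> a" and g: "g \<in> l2H"
  shows "adj Bidx (chi gam b a) g
    = pullback (block_map a b (\<lambda>n. Some (gamma_index gam a b n)) (pre (Dn a b))) g"
proof (rule adj_pullback[OF _ dom_block_map dom_block_map _ g])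
  show "inverse_maps (block_map b a (gamma_index_inv gam a b) (pre (Up b a)))
      (block_map a b (\<lambda>n. Some (gamma_index gam a b n)) (pre (Dn a b)))"
    by (rule inverse_maps_block_map[OF inverse_maps_sym[OF inverse_maps_gamma_index[OF gam ba]]
          bij_pair_pre[OF ba]])
qed (use chi_eq_pullback[OF gam ba] in blast)

fun elem_index_map :: "('k::order \<Rightarrow> 'k \<Rightarrow> (nat \<Rightarrow> complex) \<Rightarrow> (nat \<Rightarrow> complex)) \<Rightarrow> 'k elem \<Rightarrow> nat \<rightharpoonup> nat"
  where
    "elem_index_map gam (Dn b a) = gamma_index_inv gam b a"
  | "elem_index_map gam (Up b a) = (\<lambda>n. Some (gamma_index gam a b n))"

fun index_map :: "('k::order \<Rightarrow> 'k \<Rightarrow> (nat \<Rightarrow> complex) \<Rightarrow> (nat \<Rightarrow> complex)) \<Rightarrow> 'k elem list \<Rightarrow> nat \<rightharpoonup> nat"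
  where
    "index_map gam [] = Some"
  | "index_map gam (x # xs) = index_map gam xs \<circ>\<^sub>m elem_index_map gam x"

lemma chi_seq_Cons: "chi_seq gam (x # xs) = chi_elem gam x \<circ> chi_seq gam xs"
  by (simp add: chi_seq_def)

definition block_pullback :: "(('k::order idx \<Rightarrow> complex) \<Rightarrow> ('k idx \<Rightarrow> complex))
    \<Rightarrow> 'k \<Rightarrow> 'k \<Rightarrow> (nat \<rightharpoonup> nat) \<Rightarrow> bool" where
  "block_pullback T s e \<tau> \<longleftrightarrow> inj_on \<tau> (dom \<tau>) \<and>
     (\<exists>P Q. bij_pair (Spaths e) (Spaths s) P Q \<and> (\<forall>f\<in>l2H. T f = pullback (block_map s e \<tau> P) f))"

lemma block_pullback_comp:
  assumes T: "block_pullback T m e \<tau>1" and U: "block_pullback U s m \<tau>2"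
  shows "block_pullback (T \<circ> U) s e (\<tau>2 \<circ>\<^sub>m \<tau>1)"
proof -
  obtain P1 Q1 where inj1: "inj_on \<tau>1 (dom \<tau>1)" and bp1: "bij_pair (Spaths e) (Spaths m) P1 Q1"
    and T: "\<forall>f\<in>l2H. T f = pullback (block_map m e \<tau>1 P1) f"
    using T unfolding block_pullback_def by blast
  obtain P2 Q2 where inj2: "inj_on \<tau>2 (dom \<tau>2)" and bp2: "bij_pair (Spaths m) (Spaths s) P2 Q2"
    and U: "\<forall>f\<in>l2H. U f = pullback (block_map s m \<tau>2 P2) f"
    using U unfolding block_pullback_def by blast
  have into: "\<forall>r\<in>Spaths e. P1 r \<in> Spaths m" using bp1 unfolding bij_pair_def by blast
  have "(T \<circ> U) f = pullback (block_map s e (\<tau>2 \<circ>\<^sub>m \<tau>1) (P2 \<circ> P1)) f" if f: "f \<in> l2H" for f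
  proof -
    have "U f \<in> l2H"
      using U f pullback_l2[OF inj_on_dom_block_map[OF inj2 bp2] dom_block_map f] by simp
    then show ?thesis
      using T U f by (simp add: pullback_pullback block_map_comp[OF into])
  qed
  then show ?thesis
    unfolding block_pullback_def
    using inj_on_dom_map_comp[OF inj1 inj2] bij_pair_comp[OF bp1 bp2] by blast
qed

lemma chi_elem_block_pullback:
  assumes gam: "gamma_system gam" and x: "evalid x"
  shows "block_pullback (chi_elem gam x) (estart x) (eend x) (elem_index_map gam x)"
proof (cases x)
  case (Up b a)
  then have ba: "b \<le> a" using x by simp
  show ?thesis
    unfolding block_pullback_def
    using Up inj_on_dom_gamma_index[OF gam ba] adj_chi_eq_pullback[OF gam ba]
      bij_pair_sym[OF bij_pair_pre[OF ba]] by auto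
next
  case (Dn b a)
  then have ab: "a \<le> b" using x by simp
  show ?thesis
    unfolding block_pullback_def
    using Dn chi_eq_pullback[OF gam ab] bij_pair_pre[OF ab] inj_on_dom_gamma_index_inv[OF gam ab]
    by auto
qed

lemma chi_seq_block_pullback:
  assumes gam: "gamma_system gam"
  shows "pwf xs \<Longrightarrow> block_pullback (chi_seq gam xs) (pstart xs) (pend xs) (index_map gam xs)"
proof (induction xs)
  case Nil then show ?case by (simp add: pwf_def)
next
  case (Cons x xs)
  have x: "block_pullback (chi_elem gam x) (estart x) (eend x) (elem_index_map gam x)"
    using chi_elem_block_pullback[OF gam] Cons.prems by (simp add: pwf_Cons)
  show ?case
  proof (cases "xs = []")
    case True
    have "index_map gam [x] = elem_index_map gam x" and "chi_seq gam [x] = chi_elem gam x"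
      by (auto simp: map_comp_def chi_seq_def split: option.splits)
    then show ?thesis using True x by simp
  next
    case False
    then have "pwf xs" "estart x = pend xs" using Cons.prems by (auto simp: pwf_Cons)
    then have "block_pullback (chi_elem gam x \<circ> chi_seq gam xs) (pstart xs) (eend x)
        (index_map gam xs \<circ>\<^sub>m elem_index_map gam x)"
      using block_pullback_comp[OF x] Cons.IH by simp
    then show ?thesis
      by (simp only: chi_seq_Cons index_map.simps pend_Cons pstart_Cons[OF False])
  qed
qed

lemma index_map_append: "index_map gam (ys @ zs) = index_map gam zs \<circ>\<^sub>m index_map gam ys"
  by (induction ys) (auto simp: map_comp_def split: option.splits intro!: ext)

lemma inverse_maps_elem_index_map:
  assumes gam: "gamma_system gam" and x: "evalid x"
  shows "inverse_maps (elem_index_map gam x) (elem_index_map gam (einv x))"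
proof (cases x)
  case (Up b a)
  then show ?thesis using x gamma_index_inv_eq_Some_iff[OF gam] by (auto simp: inverse_maps_def)
next
  case (Dn b a)
  then show ?thesis using x gamma_index_inv_eq_Some_iff[OF gam] by (auto simp: inverse_maps_def)
qed

lemma inverse_maps_index_map:
  assumes gam: "gamma_system gam"
  shows "\<forall>x\<in>set xs. evalid x \<Longrightarrow> inverse_maps (index_map gam xs) (index_map gam (pinv xs))"
proof (induction xs)
  case Nil then show ?case by (auto simp: pinv_def inverse_maps_def)
next
  case (Cons x xs)
  then have "inverse_maps (elem_index_map gam x) (elem_index_map gam (einv x))"
    "inverse_maps (index_map gam xs) (index_map gam (pinv xs))"
    using inverse_maps_elem_index_map[OF gam] by auto
  then show ?case
    by (auto simp: inverse_maps_def pinv_Cons index_map_append map_comp_Some_iff)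
qed

lemma ran_map_comp_inverse: "inverse_maps \<psi> \<psi>' \<Longrightarrow> ran (\<psi> \<circ>\<^sub>m \<psi>') = ran \<psi>"
  unfolding inverse_maps_def ran_def by (auto simp: map_comp_Some_iff)

lemma ran_index_map_pinv_append:
  assumes "gamma_system gam" "pwf xs"
  shows "ran (index_map gam (pinv xs @ xs)) = ran (index_map gam xs)"
  using assms inverse_maps_index_map[OF assms(1)]
  by (simp add: index_map_append ran_map_comp_inverse pwf_def)

section \<open>Domains and the operator \<open>\<chi>\<^sup>*\<chi>\<close>\<close>

lemma Hdom_eq_l2_supported:
  assumes gam: "gamma_system gam" and ys: "pwf ys"
  shows "Hdom gam ys = l2_supported (ran (index_map gam ys))"
proof -
  let ?a = "pstart ys" and ?R = "ran (index_map gam ys)"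
  obtain P Q where inj: "inj_on (index_map gam ys) (dom (index_map gam ys))"
    and bp: "bij_pair (Spaths (pend ys)) (Spaths ?a) P Q"
    and chi: "\<forall>f\<in>l2H. chi_seq gam ys f = pullback (block_map ?a (pend ys) (index_map gam ys) P) f"
    using chi_seq_block_pullback[OF gam ys] unfolding block_pullback_def by blast
  have norm_eq_iff: "l2norm (chi_seq gam ys (tens ?a h q)) = l2norm h \<longleftrightarrow> (\<forall>k. k \<notin> ?R \<longrightarrow> h k = 0)"
    if h: "h \<in> l2 UNIV" and q: "q \<in> Spaths ?a" for h q
  proof -
    have inj_slice: "inj_on (\<lambda>k. (?a, k, q)) ?R" by (auto simp: inj_on_def)
    have "infsum (sq_cmod (tens ?a h q)) (ran (block_map ?a (pend ys) (index_map gam ys) P))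
        = infsum (sq_cmod (tens ?a h q)) ((\<lambda>k. (?a, k, q)) ` ?R)"
      by (rule infsum_cong_neutral) (use ran_block_map[OF bp] q in \<open>auto simp: tens_def\<close>)
    also have "\<dots> = infsum (sq_cmod h) ?R"
      by (simp add: infsum_reindex[OF inj_slice] o_def tens_def)
    finally have "l2norm (chi_seq gam ys (tens ?a h q)) = sqrt (infsum (sq_cmod h) ?R)"
      using chi tens_l2[OF h q] infsum_sq_cmod_pullback[OF inj_on_dom_block_map[OF inj bp]]
      by (simp add: l2norm_def)
    then show ?thesis
      using infsum_sq_cmod_eq_total_iff[OF l2_summable[OF h], of ?R] by (simp add: l2norm_def)
  qed
  show ?thesis
    unfolding Hdom_def l2_supported_def using norm_eq_iff pclass_trivial_in_Spaths by blast
qed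

lemma Hdom_pinv_append:
  assumes gam: "gamma_system gam" and xs: "pwf xs"
  shows "Hdom gam (pinv xs @ xs) = Hdom gam xs"
proof -
  have "pwf (pinv xs @ xs)"
    using pwf_append[of "pinv xs" xs] pinv_wf[OF xs] xs by simp
  then show ?thesis
    using Hdom_eq_l2_supported[OF gam] xs ran_index_map_pinv_append[OF gam xs] by simp
qed

lemma tensor_id_orth_proj_l2_supported:
  assumes f: "f \<in> l2H"
  shows "tensor_id a (orth_proj (l2_supported R)) f
    = (\<lambda>(c, n, q). if c = a \<and> n \<in> R \<and> q \<in> Spaths a then f (c, n, q) else 0)"
proof -
  have "f (a, n, q) = 0" if "q \<notin> Spaths a" for n q
    using l2_vanishes_outside[OF f] that by (auto simp: Bidx_def)
  then show ?thesis
    unfolding tensor_id_def using orth_proj_l2_supported[OF slice_l2[OF f]] by (intro ext) auto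
qed

lemma adj_chi_seq_chi_seq:
  assumes gam: "gamma_system gam" and xs: "pwf xs" and f: "f \<in> l2H"
  shows "adj Bidx (chi_seq gam xs) (chi_seq gam xs f) = tensor_id (pstart xs) (orth_proj (Hdom gam xs)) f"
proof -
  let ?a = "pstart xs" and ?\<tau> = "index_map gam xs"
  obtain P Q where inj: "inj_on ?\<tau> (dom ?\<tau>)" and bp: "bij_pair (Spaths (pend xs)) (Spaths ?a) P Q"
    and chi: "\<forall>f\<in>l2H. chi_seq gam xs f = pullback (block_map ?a (pend xs) ?\<tau> P) f"
    using chi_seq_block_pullback[OF gam xs] unfolding block_pullback_def by blast
  have inverse: "inverse_maps (block_map ?a (pend xs) ?\<tau> P) (block_map (pend xs) ?a (inv_map ?\<tau>) Q)"
    by (rule inverse_maps_block_map[OF inverse_maps_inv_map[OF inj] bp])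
  have "adj Bidx (chi_seq gam xs) (chi_seq gam xs f)
      = (\<lambda>i. if i \<in> ran (block_map ?a (pend xs) ?\<tau> P) then f i else 0)"
    by (rule adj_comp_pullback[OF inverse dom_block_map dom_block_map chi f])
  also have "\<dots> = tensor_id ?a (orth_proj (Hdom gam xs)) f"
    unfolding Hdom_eq_l2_supported[OF gam xs] tensor_id_orth_proj_l2_supported[OF f]
    using ran_block_map[OF bp] by (intro ext) auto
  finally show ?thesis .
qed

theorem corollary3p5:
  fixes gam :: "'k::order \<Rightarrow> 'k \<Rightarrow> (nat \<Rightarrow> complex) \<Rightarrow> (nat \<Rightarrow> complex)"
    and xs :: "'k elem list" and a :: 'k
  assumes "gamma_system gam"
    and "pwf xs" and "pend xs = a" and "pstart xs = a"
  shows "Hdom gam (pinv xs @ xs) = Hdom gam xs \<and>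
         (\<forall>f\<in>l2H. adj Bidx (chi_seq gam xs) (chi_seq gam xs f)
                   = tensor_id a (orth_proj (Hdom gam xs)) f)"
  using Hdom_pinv_append[OF assms(1,2)] adj_chi_seq_chi_seq[OF assms(1,2)] assms(4) by simp

end
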